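(* If $L_1, L_2 \subseteq \Sigma^*$ are regular languages, then $L_1 \stackrel{\rm pgi}{\leftarrow} L_2$ and $L_1 \stackrel{\rm sgi}{\leftarrow} L_2$ are regular.
   Context: Prefix-guided insertion of a string $y$ into a string $x$: $x \stackrel{\rm pgi}{\leftarrow} y = \{ x_1 y_1 y_2 x_2 \mid x = x_1 y_1 x_2,\ y = y_1 y_2,\ y_1 \neq \varepsilon \}$. Suffix-guided insertion: $x \stackrel{\rm sgi}{\leftarrow} y = \{ x_1 y_1 y_2 x_2 \mid x = x_1 y_2 x_2,\ y = y_1 y_2,\ y_2 \neq \varepsilon \}$. Both are extended to languages by taking the union over all $x \in L_1$, $y \in L_2$. *)

theory Defs
  imports Main
begin

datatype 'a rexp =
    Zero
  | One
  | Atom 'a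
  | Plus "'a rexp" "'a rexp"
  | Times "'a rexp" "'a rexp"
  | Star "'a rexp"

definition conc :: "'a list set \<Rightarrow> 'a list set \<Rightarrow> 'a list set" where
  "conc A B = {xs @ ys | xs ys. xs \<in> A \<and> ys \<in> B}"

inductive_set star :: "'a list set \<Rightarrow> 'a list set" for A :: "'a list set" where
  star_Nil: "[] \<in> star A"
| star_app: "\<lbrakk> u \<in> A; v \<in> star A \<rbrakk> \<Longrightarrow> u @ v \<in> star A"

fun lang :: "'a rexp \<Rightarrow> 'a list set" where
  "lang Zero = {}"
| "lang One = {[]}"
| "lang (Atom a) = {[a]}"
| "lang (Plus r s) = lang r \<union> lang s"
| "lang (Times r s) = conc (lang r) (lang s)"
| "lang (Star r) = star (lang r)"

definition regular :: "'a list set \<Rightarrow> bool" where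
  "regular L \<longleftrightarrow> (\<exists>r. lang r = L)"

definition pgi :: "'a list \<Rightarrow> 'a list \<Rightarrow> 'a list set" where
  "pgi x y = {x1 @ y1 @ y2 @ x2 | x1 y1 y2 x2.
                x = x1 @ y1 @ x2 \<and> y = y1 @ y2 \<and> y1 \<noteq> []}"

definition sgi :: "'a list \<Rightarrow> 'a list \<Rightarrow> 'a list set" where
  "sgi x y = {x1 @ y1 @ y2 @ x2 | x1 y1 y2 x2.
                x = x1 @ y2 @ x2 \<and> y = y1 @ y2 \<and> y2 \<noteq> []}"

definition pgi_lang :: "'a list set \<Rightarrow> 'a list set \<Rightarrow> 'a list set" where
  "pgi_lang L1 L2 = (\<Union>x\<in>L1. \<Union>y\<in>L2. pgi x y)"

definition sgi_lang :: "'a list set \<Rightarrow> 'a list set \<Rightarrow> 'a list set" where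
  "sgi_lang L1 L2 = (\<Union>x\<in>L1. \<Union>y\<in>L2. sgi x y)"

end

theory Submission
  imports Defs
begin

text \<open>Over a finite alphabet a language is regular iff it has finitely many left quotients
  \<open>Derivs w L\<close> (Myhill--Nerode); the harder direction is the McNaughton--Yamada construction
  applied to the automaton whose states are the quotients. A word \<open>x\<^sub>1 y\<^sub>1 y\<^sub>2 x\<^sub>2\<close> of
  \<open>pgi_lang L1 L2\<close> is classified by the quotient \<open>p\<close> of \<open>L1\<close> after \<open>x\<^sub>1\<close> and the quotients \<open>p'\<close>
  of \<open>p\<close> and \<open>q\<close> of \<open>L2\<close> after \<open>y\<^sub>1\<close>: then \<open>y\<^sub>2 \<in> q\<close> and \<open>x\<^sub>2 \<in> p'\<close>, so the language is a
  finite union of concatenations of four regular languages. For \<open>sgi_lang\<close> one uses instead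
  the quotient \<open>q\<close> of \<open>L2\<close> after \<open>y\<^sub>1\<close>, which must contain \<open>y\<^sub>2\<close>.\<close>

section \<open>Regular languages\<close>

lemma in_conc_iff: "w \<in> conc A B \<longleftrightarrow> (\<exists>u v. w = u @ v \<and> u \<in> A \<and> v \<in> B)"
  by (auto simp: conc_def)

lemma concI: "u \<in> A \<Longrightarrow> v \<in> B \<Longrightarrow> u @ v \<in> conc A B"
  by (auto simp: conc_def)

lemma star_append: "u \<in> star A \<Longrightarrow> v \<in> star A \<Longrightarrow> u @ v \<in> star A"
  by (induction u rule: star.induct) (auto intro: star.star_app)

lemma star_single: "u \<in> A \<Longrightarrow> u \<in> star A"
  using star.star_app[OF _ star.star_Nil] by fastforce

lemma star_mono: "A \<subseteq> B \<Longrightarrow> star A \<subseteq> star B"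
proof
  fix w assume "w \<in> star A" and "A \<subseteq> B"
  then show "w \<in> star B" by (induction rule: star.induct) (auto intro: star.intros)
qed

lemma regular_Un: "regular A \<Longrightarrow> regular B \<Longrightarrow> regular (A \<union> B)"
  unfolding regular_def by (metis lang.simps(4))

lemma regular_conc: "regular A \<Longrightarrow> regular B \<Longrightarrow> regular (conc A B)"
  unfolding regular_def by (metis lang.simps(5))

lemma regular_star: "regular A \<Longrightarrow> regular (star A)"
  unfolding regular_def by (metis lang.simps(6))

lemma regular_UN: "finite I \<Longrightarrow> (\<And>i. i \<in> I \<Longrightarrow> regular (F i)) \<Longrightarrow> regular (\<Union>i\<in>I. F i)"
proof (induction I rule: finite_induct)
  case empty
  show ?case unfolding regular_def by (metis lang.simps(1) UN_empty)
qed (simp add: regular_Un)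

lemma regular_singleton: "regular {w}"
proof (induction w)
  case Nil
  show ?case unfolding regular_def by (metis lang.simps(2))
next
  case (Cons a w)
  have "{a # w} = conc {[a]} {w}" by (auto simp: conc_def)
  moreover have "regular {[a]}" unfolding regular_def by (metis lang.simps(3))
  ultimately show ?case using Cons by (simp add: regular_conc)
qed

lemma regular_finite: "finite A \<Longrightarrow> regular A"
  using regular_UN[of A "\<lambda>w. {w}"] by (simp add: regular_singleton)

section \<open>Left quotients\<close>

definition Derivs :: "'a list \<Rightarrow> 'a list set \<Rightarrow> 'a list set" where
  "Derivs w L = {v. w @ v \<in> L}"

definition quotients :: "'a list set \<Rightarrow> 'a list set set" where
  "quotients L = range (\<lambda>w. Derivs w L)"

lemma Derivs_Nil [simp]: "Derivs [] L = L"
  by (simp add: Derivs_def)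

lemma Derivs_append: "Derivs (u @ v) L = Derivs v (Derivs u L)"
  by (simp add: Derivs_def)

lemma Derivs_in_quotients: "Derivs w L \<in> quotients L"
  by (simp add: quotients_def)

lemma quotients_Derivs: "quotients (Derivs u L) \<subseteq> quotients L"
  by (auto simp: quotients_def Derivs_append[symmetric])

lemma finite_quotients_quotient:
  assumes "finite (quotients L)" and "X \<in> quotients L"
  shows "finite (quotients X)"
proof -
  obtain w where "X = Derivs w L" using assms(2) by (auto simp: quotients_def)
  with assms(1) show ?thesis by (metis quotients_Derivs finite_subset)
qed

lemma finite_quotients_finite:
  assumes "finite L"
  shows "finite (quotients L)"
proof (rule finite_subset)
  have "{v. \<exists>u. u @ v = x} \<subseteq> (\<lambda>n. drop n x) ` {..length x}" for x :: "'a list"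
  proof
    fix v assume "v \<in> {v. \<exists>u. u @ v = x}"
    then obtain u where "u @ v = x" by blast
    then show "v \<in> (\<lambda>n. drop n x) ` {..length x}"
      by (intro image_eqI[of _ _ "length u"]) auto
  qed
  then have "finite {v. \<exists>u. u @ v = x}" for x :: "'a list"
    by (rule finite_subset) simp
  then show "finite (Pow (\<Union>x\<in>L. {v. \<exists>u. u @ v = x}))"
    using assms by simp
  show "quotients L \<subseteq> Pow (\<Union>x\<in>L. {v. \<exists>u. u @ v = x})"
    by (auto simp: quotients_def Derivs_def)
qed

lemma finite_quotients_Un:
  assumes "finite (quotients A)" "finite (quotients B)"
  shows "finite (quotients (A \<union> B))"
proof (rule finite_subset)
  show "quotients (A \<union> B) \<subseteq> (\<lambda>(X, Y). X \<union> Y) ` (quotients A \<times> quotients B)"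
  proof
    fix Z assume "Z \<in> quotients (A \<union> B)"
    then obtain w where "Z = Derivs w A \<union> Derivs w B"
      by (auto simp: quotients_def Derivs_def)
    then show "Z \<in> (\<lambda>(X, Y). X \<union> Y) ` (quotients A \<times> quotients B)"
      by (auto intro: Derivs_in_quotients)
  qed
qed (use assms in simp)

lemma finite_quotients_Int:
  assumes "finite (quotients A)" "finite (quotients B)"
  shows "finite (quotients (A \<inter> B))"
proof (rule finite_subset)
  show "quotients (A \<inter> B) \<subseteq> (\<lambda>(X, Y). X \<inter> Y) ` (quotients A \<times> quotients B)"
  proof
    fix Z assume "Z \<in> quotients (A \<inter> B)"
    then obtain w where "Z = Derivs w A \<inter> Derivs w B"
      by (auto simp: quotients_def Derivs_def)
    then show "Z \<in> (\<lambda>(X, Y). X \<inter> Y) ` (quotients A \<times> quotients B)"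
      by (auto intro: Derivs_in_quotients)
  qed
qed (use assms in simp)

lemma finite_quotients_Diff_Nil:
  assumes "finite (quotients A)"
  shows "finite (quotients (A - {[]}))"
proof (rule finite_subset)
  have "Derivs w (A - {[]}) = (if w = [] then A - {[]} else Derivs w A)" for w
    by (auto simp: Derivs_def)
  then show "quotients (A - {[]}) \<subseteq> insert (A - {[]}) (quotients A)"
    by (auto simp: quotients_def)
qed (use assms in simp)

lemma Derivs_conc:
  "Derivs w (conc A B) = conc (Derivs w A) B \<union> \<Union>{Derivs v B | u v. w = u @ v \<and> u \<in> A}"
proof (intro equalityI subsetI)
  fix x assume "x \<in> Derivs w (conc A B)"
  then obtain p q where pq: "w @ x = p @ q" "p \<in> A" "q \<in> B"
    by (auto simp: Derivs_def in_conc_iff)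
  then obtain r where "w = p @ r \<and> r @ x = q \<or> w @ r = p \<and> x = r @ q"
    by (auto simp: append_eq_append_conv2)
  then show "x \<in> conc (Derivs w A) B \<union> \<Union>{Derivs v B | u v. w = u @ v \<and> u \<in> A}"
    using pq by (auto simp: Derivs_def intro: concI)
next
  fix x assume "x \<in> conc (Derivs w A) B \<union> \<Union>{Derivs v B | u v. w = u @ v \<and> u \<in> A}"
  then show "x \<in> Derivs w (conc A B)"
    by (auto simp: Derivs_def in_conc_iff) (metis append.assoc)+
qed

lemma finite_quotients_conc:
  assumes "finite (quotients A)" "finite (quotients B)"
  shows "finite (quotients (conc A B))"
proof (rule finite_subset)
  show "quotients (conc A B) \<subseteq> (\<lambda>(X, Y). conc X B \<union> \<Union>Y) ` (quotients A \<times> Pow (quotients B))"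
  proof
    fix Z assume "Z \<in> quotients (conc A B)"
    then obtain w where "Z = Derivs w (conc A B)" by (auto simp: quotients_def)
    then have "Z = (\<lambda>(X, Y). conc X B \<union> \<Union>Y) (Derivs w A, {Derivs v B | u v. w = u @ v \<and> u \<in> A})"
      by (simp add: Derivs_conc)
    then show "Z \<in> (\<lambda>(X, Y). conc X B \<union> \<Union>Y) ` (quotients A \<times> Pow (quotients B))"
      by (rule image_eqI) (auto intro: Derivs_in_quotients)
  qed
qed (use assms in simp)

lemma star_split:
  assumes "w @ x \<in> star A" and "w \<noteq> []"
  shows "\<exists>u y z r. w = u @ y \<and> u \<in> star A \<and> y \<noteq> [] \<and> y @ z \<in> A \<and> x = z @ r \<and> r \<in> star A"
  using assms
proof (induction "w @ x" arbitrary: w x rule: star.induct)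
  case (star_app a b)
  then obtain s where "w = a @ s \<and> s @ x = b \<or> w @ s = a \<and> x = s @ b"
    by (auto simp: append_eq_append_conv2)
  then show ?case
  proof
    assume split: "w = a @ s \<and> s @ x = b"
    show ?thesis
    proof (cases "s = []")
      case True
      with split star_app show ?thesis
        by (intro exI[of _ "[]"] exI[of _ a] exI[of _ "[]"] exI[of _ b]) (auto intro: star.star_Nil)
    next
      case False
      with split star_app.hyps(3) obtain u y z r where
        "s = u @ y" "u \<in> star A" "y \<noteq> []" "y @ z \<in> A" "x = z @ r" "r \<in> star A"
        by blast
      with split star_app.hyps(1) show ?thesis
        by (intro exI[of _ "a @ u"] exI[of _ y] exI[of _ z] exI[of _ r]) (auto intro: star.star_app)
    qed
  next
    assume "w @ s = a \<and> x = s @ b"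
    with star_app show ?thesis
      by (intro exI[of _ "[]"] exI[of _ w] exI[of _ s] exI[of _ b]) (auto intro: star.star_Nil)
  qed
qed simp

lemma Derivs_star:
  assumes "w \<noteq> []"
  shows "Derivs w (star A) = conc (\<Union>{Derivs y A | u y. w = u @ y \<and> u \<in> star A \<and> y \<noteq> []}) (star A)"
proof (intro equalityI subsetI)
  fix x assume "x \<in> Derivs w (star A)"
  then have "w @ x \<in> star A" by (simp add: Derivs_def)
  then obtain u y z r where "w = u @ y" "u \<in> star A" "y \<noteq> []" "y @ z \<in> A" "x = z @ r" "r \<in> star A"
    using star_split[OF _ assms] by blast
  then show "x \<in> conc (\<Union>{Derivs y A | u y. w = u @ y \<and> u \<in> star A \<and> y \<noteq> []}) (star A)"
    by (auto simp: Derivs_def intro!: concI)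
next
  fix x assume "x \<in> conc (\<Union>{Derivs y A | u y. w = u @ y \<and> u \<in> star A \<and> y \<noteq> []}) (star A)"
  then obtain u y z r where "x = z @ r" "r \<in> star A" "w = u @ y" "u \<in> star A" "y @ z \<in> A"
    by (auto simp: in_conc_iff Derivs_def)
  then have "u @ (y @ z) @ r \<in> star A" by (intro star_append star.star_app)
  then show "x \<in> Derivs w (star A)"
    using \<open>x = z @ r\<close> \<open>w = u @ y\<close> by (simp add: Derivs_def)
qed

lemma finite_quotients_star:
  assumes "finite (quotients A)"
  shows "finite (quotients (star A))"
proof (rule finite_subset)
  show "quotients (star A) \<subseteq> insert (star A) ((\<lambda>Y. conc (\<Union>Y) (star A)) ` Pow (quotients A))"
  proof
    fix Z assume "Z \<in> quotients (star A)"
    then obtain w where Z: "Z = Derivs w (star A)" by (auto simp: quotients_def)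
    show "Z \<in> insert (star A) ((\<lambda>Y. conc (\<Union>Y) (star A)) ` Pow (quotients A))"
    proof (cases "w = []")
      case False
      then show ?thesis unfolding Z Derivs_star[OF False]
        by (intro insertI2 image_eqI[OF refl]) (auto intro: Derivs_in_quotients)
    qed (simp add: Z)
  qed
qed (use assms in simp)

lemma finite_quotients_lang: "finite (quotients (lang r))"
  by (induction r)
    (simp_all add: finite_quotients_finite finite_quotients_Un finite_quotients_conc finite_quotients_star)

lemma finite_quotients_if_regular: "regular L \<Longrightarrow> finite (quotients L)"
  unfolding regular_def using finite_quotients_lang by blast

section \<open>Kleene's theorem for deterministic automata\<close>

inductive path_via :: "('s \<Rightarrow> 'a \<Rightarrow> 's) \<Rightarrow> 's set \<Rightarrow> 's \<Rightarrow> 's \<Rightarrow> 'a list \<Rightarrow> bool"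
  for f :: "'s \<Rightarrow> 'a \<Rightarrow> 's" and S :: "'s set" where
  path_via_Nil: "path_via f S i i []"
| path_via_step: "f i a = j \<Longrightarrow> path_via f S i j [a]"
| path_via_append: "\<lbrakk>path_via f S i k u; k \<in> S; path_via f S k j v\<rbrakk> \<Longrightarrow> path_via f S i j (u @ v)"

abbreviation paths_via :: "('s \<Rightarrow> 'a \<Rightarrow> 's) \<Rightarrow> 's set \<Rightarrow> 's \<Rightarrow> 's \<Rightarrow> 'a list set" where
  "paths_via f S i j \<equiv> {w. path_via f S i j w}"

lemma path_via_mono: "path_via f S i j u \<Longrightarrow> S \<subseteq> T \<Longrightarrow> path_via f T i j u"
  by (induction rule: path_via.induct) (auto intro: path_via.intros)

lemma finite_paths_via_empty: "finite (paths_via f {} i j :: ('a::finite) list set)"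
proof (rule finite_subset)
  show "paths_via f {} i j \<subseteq> insert [] (range (\<lambda>a. [a]))"
  proof
    fix w assume "w \<in> paths_via f {} i j"
    then show "w \<in> insert [] (range (\<lambda>a. [a]))"
      by simp (induction rule: path_via.induct; auto)
  qed
qed simp

lemma star_paths_via: "w \<in> star (paths_via f S k k) \<Longrightarrow> k \<in> S \<Longrightarrow> path_via f S k k w"
  by (induction rule: star.induct) (auto intro: path_via.intros)

lemma paths_via_insert_supset:
  "paths_via f S i j \<union> conc (paths_via f S i k) (conc (star (paths_via f S k k)) (paths_via f S k j))
     \<subseteq> paths_via f (insert k S) i j"
proof -
  have mono: "path_via f (insert k S) i j w" if "path_via f S i j w" for i j w
    using that by (rule path_via_mono) blast
  have "star (paths_via f S k k) \<subseteq> star (paths_via f (insert k S) k k)"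
    by (rule star_mono) (auto intro: mono)
  then have loops: "star (paths_via f S k k) \<subseteq> paths_via f (insert k S) k k"
    by (auto intro: star_paths_via)
  show ?thesis
  proof (intro subsetI, elim UnE)
    fix w assume "w \<in> conc (paths_via f S i k) (conc (star (paths_via f S k k)) (paths_via f S k j))"
    then obtain u c v where "w = u @ c @ v" "path_via f S i k u"
      "c \<in> star (paths_via f S k k)" "path_via f S k j v"
      by (auto simp: in_conc_iff)
    moreover from loops \<open>c \<in> star (paths_via f S k k)\<close>
    have "path_via f (insert k S) k j (c @ v)"
      by (auto intro: path_via_append mono \<open>path_via f S k j v\<close>)
    ultimately show "w \<in> paths_via f (insert k S) i j"
      by (auto intro: path_via_append mono)
  qed (simp add: mono)
qed

lemma paths_via_absorb_right:
  "paths_via f S i k \<union> conc (paths_via f S i k) (conc (star (paths_via f S k k)) (paths_via f S k k))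
     \<subseteq> conc (paths_via f S i k) (star (paths_via f S k k))"
proof (intro subsetI, elim UnE)
  fix u assume "u \<in> paths_via f S i k"
  then have "u @ [] \<in> conc (paths_via f S i k) (star (paths_via f S k k))"
    by (intro concI star.star_Nil)
  then show "u \<in> conc (paths_via f S i k) (star (paths_via f S k k))" by simp
next
  fix u assume "u \<in> conc (paths_via f S i k) (conc (star (paths_via f S k k)) (paths_via f S k k))"
  then obtain a c b where "u = a @ c @ b" "a \<in> paths_via f S i k"
    "c \<in> star (paths_via f S k k)" "b \<in> paths_via f S k k"
    by (auto simp: in_conc_iff)
  then show "u \<in> conc (paths_via f S i k) (star (paths_via f S k k))"
    by (auto intro: concI star_append star_single)
qed

lemma paths_via_absorb_left:
  "paths_via f S k j \<union> conc (paths_via f S k k) (conc (star (paths_via f S k k)) (paths_via f S k j))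
     \<subseteq> conc (star (paths_via f S k k)) (paths_via f S k j)"
proof (intro subsetI, elim UnE)
  fix v assume "v \<in> paths_via f S k j"
  then have "[] @ v \<in> conc (star (paths_via f S k k)) (paths_via f S k j)"
    by (intro concI star.star_Nil)
  then show "v \<in> conc (star (paths_via f S k k)) (paths_via f S k j)" by simp
next
  fix v assume "v \<in> conc (paths_via f S k k) (conc (star (paths_via f S k k)) (paths_via f S k j))"
  then obtain a c b where "v = a @ c @ b" "a \<in> paths_via f S k k"
    "c \<in> star (paths_via f S k k)" "b \<in> paths_via f S k j"
    by (auto simp: in_conc_iff)
  then have "(a @ c) @ b \<in> conc (star (paths_via f S k k)) (paths_via f S k j)"
    by (intro concI star_append[OF star_single]) simp_all
  then show "v \<in> conc (star (paths_via f S k k)) (paths_via f S k j)"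
    using \<open>v = a @ c @ b\<close> by simp
qed

lemma paths_via_split_append:
  assumes "m \<in> S"
    and u: "u \<in> paths_via f S i m \<union> conc (paths_via f S i k) (conc (star (paths_via f S k k)) (paths_via f S k m))"
    and v: "v \<in> paths_via f S m j \<union> conc (paths_via f S m k) (conc (star (paths_via f S k k)) (paths_via f S k j))"
  shows "u @ v \<in> paths_via f S i j \<union> conc (paths_via f S i k) (conc (star (paths_via f S k k)) (paths_via f S k j))"
proof -
  let ?P = "paths_via f S" and ?C = "star (paths_via f S k k)"
  note join = path_via_append[OF _ \<open>m \<in> S\<close>]
  from u show ?thesis
  proof
    assume u: "u \<in> ?P i m"
    from v show ?thesis
    proof
      assume "v \<in> ?P m j"
      with u show ?thesis by (auto intro: join)
    next
      assume "v \<in> conc (?P m k) (conc ?C (?P k j))"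
      then obtain a c b where v: "v = a @ c @ b" "path_via f S m k a" "c \<in> ?C" "b \<in> ?P k j"
        by (auto simp: in_conc_iff)
      have "(u @ a) @ c @ b \<in> conc (?P i k) (conc ?C (?P k j))"
        using u v by (intro concI) (auto intro: join)
      then show ?thesis using v by simp
    qed
  next
    assume "u \<in> conc (?P i k) (conc ?C (?P k m))"
    then obtain a c b where u: "u = a @ c @ b" "a \<in> ?P i k" "c \<in> ?C" "path_via f S k m b"
      by (auto simp: in_conc_iff)
    from v show ?thesis
    proof
      assume "v \<in> ?P m j"
      then have "a @ c @ (b @ v) \<in> conc (?P i k) (conc ?C (?P k j))"
        using u by (intro concI) (auto intro: join)
      then show ?thesis using u by simp
    next
      assume "v \<in> conc (?P m k) (conc ?C (?P k j))"
      then obtain a' c' b' where v: "v = a' @ c' @ b'" "path_via f S m k a'" "c' \<in> ?C" "b' \<in> ?P k j"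
        by (auto simp: in_conc_iff)
      have "b @ a' \<in> ?C" using u v by (auto intro: star_single join)
      then have "c @ (b @ a') @ c' \<in> ?C" using u(3) v(3) by (blast intro: star_append)
      then have "a @ (c @ (b @ a') @ c') @ b' \<in> conc (?P i k) (conc ?C (?P k j))"
        using u(2) v(4) by (intro concI)
      then show ?thesis using u v by simp
    qed
  qed
qed

lemma paths_via_insert_subset:
  assumes "path_via f (insert k S) i j w"
  shows "w \<in> paths_via f S i j \<union> conc (paths_via f S i k) (conc (star (paths_via f S k k)) (paths_via f S k j))"
  using assms
proof (induction rule: path_via.induct)
  case (path_via_append i m u j v)
  show ?case
  proof (cases "m = k")
    case True
    with path_via_append.IH have
      "u \<in> conc (paths_via f S i k) (star (paths_via f S k k))"
      "v \<in> conc (star (paths_via f S k k)) (paths_via f S k j)"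
      by (auto intro: subsetD[OF paths_via_absorb_right] subsetD[OF paths_via_absorb_left])
    then obtain a c c' b where "u = a @ c" "a \<in> paths_via f S i k" "c \<in> star (paths_via f S k k)"
      "v = c' @ b" "c' \<in> star (paths_via f S k k)" "b \<in> paths_via f S k j"
      by (auto simp: in_conc_iff)
    then have "a @ (c @ c') @ b \<in> conc (paths_via f S i k) (conc (star (paths_via f S k k)) (paths_via f S k j))"
      by (intro concI star_append)
    with \<open>u = a @ c\<close> \<open>v = c' @ b\<close> show ?thesis by simp
  next
    case False
    with path_via_append.hyps(2) have "m \<in> S" by simp
    from paths_via_split_append[OF this path_via_append.IH] show ?thesis .
  qed
qed (auto intro: path_via.intros)

lemma paths_via_insert:
  "paths_via f (insert k S) i j
     = paths_via f S i j \<union> conc (paths_via f S i k) (conc (star (paths_via f S k k)) (paths_via f S k j))"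
proof (rule equalityI)
  show "paths_via f (insert k S) i j \<subseteq> paths_via f S i j
      \<union> conc (paths_via f S i k) (conc (star (paths_via f S k k)) (paths_via f S k j))"
    by (rule subsetI) (rule paths_via_insert_subset, simp)
qed (rule paths_via_insert_supset)

lemma regular_paths_via:
  fixes f :: "'s \<Rightarrow> 'a::finite \<Rightarrow> 's"
  assumes "finite S"
  shows "regular (paths_via f S i j)"
  using assms
proof (induction S arbitrary: i j rule: finite_induct)
  case empty
  show ?case by (rule regular_finite[OF finite_paths_via_empty])
next
  case (insert k S)
  then show ?case by (simp add: paths_via_insert regular_Un regular_conc regular_star)
qed

lemma path_via_foldl: "path_via f S i j w \<Longrightarrow> foldl f i w = j"
  by (induction rule: path_via.induct) auto

lemma foldl_path_via: "range (foldl f i) \<subseteq> S \<Longrightarrow> path_via f S i (foldl f i w) w"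
proof (induction w rule: rev_induct)
  case (snoc a w)
  have "foldl f i w \<in> S" using snoc.prems by auto
  with snoc show ?case by (auto intro: path_via_append path_via_step)
qed (simp add: path_via_Nil)

lemma regular_foldl_eq:
  fixes f :: "'s \<Rightarrow> 'a::finite \<Rightarrow> 's"
  assumes "finite (range (foldl f i))"
  shows "regular {w. foldl f i w = j}"
proof -
  have "{w. foldl f i w = j} = paths_via f (range (foldl f i)) i j"
    using foldl_path_via[of f i "range (foldl f i)"] by (auto dest: path_via_foldl)
  with regular_paths_via[OF assms] show ?thesis by simp
qed

section \<open>Myhill--Nerode\<close>

lemma foldl_Derivs: "foldl (\<lambda>X a. Derivs [a] X) L w = Derivs w L"
  by (induction w arbitrary: L) (simp_all add: Derivs_append[of "[_]", symmetric])

lemma regular_Derivs_eq: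
  fixes L :: "('a::finite) list set"
  assumes "finite (quotients L)"
  shows "regular {w. Derivs w L = X}"
proof -
  have "finite (range (foldl (\<lambda>Y a. Derivs [a] Y) L))"
    using assms by (simp add: foldl_Derivs quotients_def)
  then have "regular {w. foldl (\<lambda>Y a. Derivs [a] Y) L w = X}"
    by (rule regular_foldl_eq)
  then show ?thesis by (simp only: foldl_Derivs)
qed

lemma regular_if_finite_quotients:
  fixes L :: "('a::finite) list set"
  assumes "finite (quotients L)"
  shows "regular L"
proof -
  have "L = (\<Union>X\<in>{X \<in> quotients L. [] \<in> X}. {w. Derivs w L = X})"
  proof (intro equalityI subsetI)
    fix w assume "w \<in> L"
    then have "Derivs w L \<in> {X \<in> quotients L. [] \<in> X}"
      using Derivs_in_quotients by (simp add: Derivs_def)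
    then show "w \<in> (\<Union>X\<in>{X \<in> quotients L. [] \<in> X}. {w. Derivs w L = X})" by blast
  qed (auto simp: Derivs_def)
  moreover have "regular (\<Union>X\<in>{X \<in> quotients L. [] \<in> X}. {w. Derivs w L = X})"
    using assms by (intro regular_UN regular_Derivs_eq) simp_all
  ultimately show ?thesis by simp
qed

theorem regular_iff_finite_quotients:
  fixes L :: "('a::finite) list set"
  shows "regular L \<longleftrightarrow> finite (quotients L)"
  using finite_quotients_if_regular regular_if_finite_quotients by blast

lemma regular_Int:
  fixes A B :: "('a::finite) list set"
  shows "regular A \<Longrightarrow> regular B \<Longrightarrow> regular (A \<inter> B)"
  by (simp add: regular_iff_finite_quotients finite_quotients_Int)

lemma regular_Diff_Nil:
  fixes A :: "('a::finite) list set"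
  shows "regular A \<Longrightarrow> regular (A - {[]})"
  by (simp add: regular_iff_finite_quotients finite_quotients_Diff_Nil)

lemma regular_quotient:
  fixes L :: "('a::finite) list set"
  shows "regular L \<Longrightarrow> X \<in> quotients L \<Longrightarrow> regular X"
  by (simp add: regular_iff_finite_quotients finite_quotients_quotient)

section \<open>Guided insertion\<close>

lemma pgi_lang_eq:
  "pgi_lang L1 L2 = (\<Union>p\<in>quotients L1. \<Union>p'\<in>quotients L1. \<Union>q\<in>quotients L2.
     conc {x. Derivs x L1 = p} (conc (({y. Derivs y p = p'} \<inter> {y. Derivs y L2 = q}) - {[]}) (conc q p')))"
    (is "_ = ?R")
proof (intro equalityI subsetI)
  fix w assume "w \<in> pgi_lang L1 L2"
  then obtain x1 y1 y2 x2 where w: "w = x1 @ y1 @ y2 @ x2" "x1 @ y1 @ x2 \<in> L1" "y1 @ y2 \<in> L2" "y1 \<noteq> []"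
    unfolding pgi_lang_def pgi_def by blast
  let ?p = "Derivs x1 L1"
  have "w \<in> conc {x. Derivs x L1 = ?p}
      (conc (({y. Derivs y ?p = Derivs y1 ?p} \<inter> {y. Derivs y L2 = Derivs y1 L2}) - {[]})
        (conc (Derivs y1 L2) (Derivs y1 ?p)))"
    unfolding w(1) using w(2-4) by (intro concI) (simp_all add: Derivs_def)
  moreover have "Derivs y1 ?p \<in> quotients L1"
    by (simp add: Derivs_append[symmetric] Derivs_in_quotients)
  ultimately show "w \<in> ?R" using Derivs_in_quotients by blast
next
  fix w assume "w \<in> ?R"
  then obtain x1 y1 y2 x2 where "w = x1 @ y1 @ y2 @ x2" "x1 @ y1 @ x2 \<in> L1" "y1 @ y2 \<in> L2" "y1 \<noteq> []"
    by (auto simp: in_conc_iff Derivs_def)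
  then show "w \<in> pgi_lang L1 L2"
    unfolding pgi_lang_def pgi_def by blast
qed

lemma sgi_lang_eq:
  "sgi_lang L1 L2 = (\<Union>p\<in>quotients L1. \<Union>p'\<in>quotients L1. \<Union>q\<in>quotients L2.
     conc {x. Derivs x L1 = p} (conc {y. Derivs y L2 = q} (conc (({y. Derivs y p = p'} \<inter> q) - {[]}) p')))"
    (is "_ = ?R")
proof (intro equalityI subsetI)
  fix w assume "w \<in> sgi_lang L1 L2"
  then obtain x1 y1 y2 x2 where w: "w = x1 @ y1 @ y2 @ x2" "x1 @ y2 @ x2 \<in> L1" "y1 @ y2 \<in> L2" "y2 \<noteq> []"
    unfolding sgi_lang_def sgi_def by blast
  let ?p = "Derivs x1 L1"
  have "w \<in> conc {x. Derivs x L1 = ?p} (conc {y. Derivs y L2 = Derivs y1 L2}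
      (conc (({y. Derivs y ?p = Derivs y2 ?p} \<inter> Derivs y1 L2) - {[]}) (Derivs y2 ?p)))"
    unfolding w(1) using w(2-4) by (intro concI) (simp_all add: Derivs_def)
  moreover have "Derivs y2 ?p \<in> quotients L1"
    by (simp add: Derivs_append[symmetric] Derivs_in_quotients)
  ultimately show "w \<in> ?R" using Derivs_in_quotients by blast
next
  fix w assume "w \<in> ?R"
  then obtain x1 y1 y2 x2 where "w = x1 @ y1 @ y2 @ x2" "x1 @ y2 @ x2 \<in> L1" "y1 @ y2 \<in> L2" "y2 \<noteq> []"
    by (auto simp: in_conc_iff Derivs_def)
  then show "w \<in> sgi_lang L1 L2"
    unfolding sgi_lang_def sgi_def by blast
qed

theorem proposition4p3:
  fixes L1 L2 :: "('a::finite) list set"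
  assumes "regular L1" and "regular L2"
  shows "regular (pgi_lang L1 L2) \<and> regular (sgi_lang L1 L2)"
proof
  have fin1: "finite (quotients L1)" and fin2: "finite (quotients L2)"
    using assms by (simp_all add: regular_iff_finite_quotients)
  have quotient: "regular X" "finite (quotients X)" if "X \<in> quotients L1 \<union> quotients L2" for X
    using that assms fin1 fin2 by (auto intro: regular_quotient finite_quotients_quotient)
  show "regular (pgi_lang L1 L2)"
    unfolding pgi_lang_eq
    by (intro regular_UN regular_conc regular_Diff_Nil regular_Int regular_Derivs_eq fin1 fin2 quotient) auto
  show "regular (sgi_lang L1 L2)"
    unfolding sgi_lang_eq
    by (intro regular_UN regular_conc regular_Diff_Nil regular_Int regular_Derivs_eq fin1 fin2 quotient) auto
qed

end
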